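(* There exists a unique $\tau_c\in(\tau_1^i,+\infty)$ such that $$p'(\tau_1^i)=\frac{2h(\tau_c)-2h(\tau_1^i)}{\tau_c^2-(\tau_1^i)^2}<p'(\tau_c).$$ Moreover, $\tau_c>\tau_2^a$ and $$p'(\tau_1^i)>\frac{2h(\tau)-2h(\tau_1^i)}{\tau^2-(\tau_1^i)^2}\quad\text{for all }\tau\in(\tau_1^i,\tau_c).$$
   Context: The pressure is $p(\tau)=\frac{\mathcal S}{(\tau-1)^\gamma}-\frac{1}{\tau^2}$ for $\tau>1$, with constants $1<\gamma<2$ and $\mathcal S>0$, assumed such that there exist $1<\tau_1^i<\tau_2^i$ with $p'(\tau)<0$ for $\tau>1$, $p''>0$ on $(1,\tau_1^i)\cup(\tau_2^i,+\infty)$, and $p''<0$ on $(\tau_1^i,\tau_2^i)$. The function $h$ (specific enthalpy) satisfies $h'(\tau)=\tau p'(\tau)$. $\tau_2^a>\tau_2^i$ denotes the point with $p'(\tau_2^a)=p'(\tau_1^i)$. *)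

theory Defs
  imports "HOL-Analysis.Analysis"
begin

definition pres :: "real \<Rightarrow> real \<Rightarrow> real \<Rightarrow> real" where
  "pres S \<gamma> \<tau> = S / (\<tau> - 1) powr \<gamma> - 1 / \<tau>\<^sup>2"

end

theory Submission
  imports Defs
begin

text \<open>
  Put \<open>A = p'(\<tau>\<^sub>1)\<close> and \<open>G(\<tau>) = 2h(\<tau>) - 2h(\<tau>\<^sub>1) - A(\<tau>\<^sup>2 - \<tau>\<^sub>1\<^sup>2)\<close>, so that \<open>G(\<tau>\<^sub>1) = 0\<close> and
  \<open>G'(\<tau>) = 2\<tau>(p'(\<tau>) - A)\<close>. Since \<open>p'\<close> decreases on \<open>[\<tau>\<^sub>1, \<tau>\<^sub>2]\<close> and increases on
  \<open>[\<tau>\<^sub>2, \<infinity>)\<close>, it lies below the level \<open>A\<close> exactly on \<open>(\<tau>\<^sub>1, \<tau>\<^sub>2\<^sup>a)\<close>. Hence \<open>G\<close>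
  strictly decreases on \<open>[\<tau>\<^sub>1, \<tau>\<^sub>2\<^sup>a]\<close>, so it is negative on \<open>(\<tau>\<^sub>1, \<tau>\<^sub>2\<^sup>a]\<close>, and
  strictly increases on \<open>[\<tau>\<^sub>2\<^sup>a, \<infinity>)\<close>, at least linearly beyond \<open>\<tau>\<^sub>2\<^sup>a + 1\<close>; so it has exactly one zero \<open>\<tau>\<^sub>c > \<tau>\<^sub>2\<^sup>a\<close>.
  For \<open>\<tau> > \<tau>\<^sub>1\<close> the chord condition says \<open>G(\<tau>) = 0\<close>, and the strict inequality
  \<open>A < p'(\<tau>)\<close> forces \<open>\<tau> > \<tau>\<^sub>2\<^sup>a\<close>. Only the sign pattern of \<open>p''\<close> on \<open>(\<tau>\<^sub>1, \<infinity>)\<close> is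
  used; the hypotheses on \<open>\<gamma>\<close>, \<open>S\<close>, the sign of \<open>p'\<close> and of \<open>p''\<close> on \<open>(1, \<tau>\<^sub>1)\<close> are not.
\<close>

lemma DERIV_neg_imp_strict_antimono_on:
  fixes f f' :: "real \<Rightarrow> real"
  assumes "\<And>x. a \<le> x \<Longrightarrow> x \<le> b \<Longrightarrow> (f has_real_derivative f' x) (at x)"
    and "\<And>x. a < x \<Longrightarrow> x < b \<Longrightarrow> f' x < 0"
  shows "strict_antimono_on {a..b} f"
proof (rule monotone_onI)
  fix r s assume rs: "r \<in> {a..b}" "s \<in> {a..b}" "r < s"
  show "f s < f r"
  proof (rule DERIV_neg_imp_decreasing_open[OF \<open>r < s\<close>])
    show "\<exists>y. (f has_real_derivative y) (at x) \<and> y < 0" if "r < x" "x < s" for x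
      using assms that rs by (intro exI[of _ "f' x"]) auto
    show "continuous_on {r..s} f"
      using rs by (intro continuous_at_imp_continuous_on ballI DERIV_isCont[OF assms(1)]) auto
  qed
qed

lemma DERIV_pos_imp_strict_mono_on_atLeast:
  fixes f f' :: "real \<Rightarrow> real"
  assumes "\<And>x. a \<le> x \<Longrightarrow> (f has_real_derivative f' x) (at x)"
    and "\<And>x. a < x \<Longrightarrow> 0 < f' x"
  shows "strict_mono_on {a..} f"
proof (rule strict_mono_onI)
  fix r s assume rs: "r \<in> {a..}" "s \<in> {a..}" "r < s"
  show "f r < f s"
  proof (rule DERIV_pos_imp_increasing_open[OF \<open>r < s\<close>])
    show "\<exists>y. (f has_real_derivative y) (at x) \<and> 0 < y" if "r < x" "x < s" for x
      using assms that rs by (intro exI[of _ "f' x"]) auto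
    show "continuous_on {r..s} f"
      using rs by (intro continuous_at_imp_continuous_on ballI DERIV_isCont[OF assms(1)]) auto
  qed
qed

lemma DERIV_ge_imp_linear_growth:
  fixes f f' :: "real \<Rightarrow> real"
  assumes "a \<le> b"
    and "\<And>x. a \<le> x \<Longrightarrow> x \<le> b \<Longrightarrow> (f has_real_derivative f' x) (at x)"
    and "\<And>x. a \<le> x \<Longrightarrow> x \<le> b \<Longrightarrow> c \<le> f' x"
  shows "f a + c * (b - a) \<le> f b"
proof -
  have "(\<lambda>x. f x - c * x) a \<le> (\<lambda>x. f x - c * x) b"
  proof (rule DERIV_nonneg_imp_nondecreasing[OF \<open>a \<le> b\<close>])
    fix x assume "a \<le> x" "x \<le> b"
    then show "\<exists>y. ((\<lambda>x. f x - c * x) has_real_derivative y) (at x) \<and> 0 \<le> y"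
      using assms by (intro exI conjI derivative_eq_intros refl) auto
  qed
  then show ?thesis by (simp add: algebra_simps)
qed

lemma has_real_derivative_pres:
  assumes "1 < t"
  shows "(pres S g has_real_derivative - S * g * (t - 1) powr (- g - 1) + 2 * t powr (- 3)) (at t)"
proof -
  have "((\<lambda>x. S * (x - 1) powr (- g) - x powr (- 2)) has_real_derivative
          - S * g * (t - 1) powr (- g - 1) + 2 * t powr (- 3)) (at t)"
    by (rule DERIV_cong, (rule derivative_eq_intros refl | use assms in linarith)+)
       (use assms in \<open>simp add: powr_diff powr_minus field_simps\<close>)
  then show ?thesis
    by (rule has_field_derivative_transform_within_open[where S = "{1<..}"])
       (use assms in \<open>auto simp: pres_def powr_minus divide_inverse powr_realpow\<close>)
qed

lemma deriv_pres_has_real_derivative: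
  assumes "1 < t"
  shows "(deriv (pres S g) has_real_derivative deriv (deriv (pres S g)) t) (at t)"
proof -
  have "((\<lambda>x. - S * g * (x - 1) powr (- g - 1) + 2 * x powr (- 3)) has_real_derivative
          S * g * (g + 1) * (t - 1) powr (- g - 2) - 6 * t powr (- 4)) (at t)"
    by (rule DERIV_cong, (rule derivative_eq_intros refl | use assms in linarith)+)
       (use assms in \<open>simp add: powr_diff powr_minus field_simps\<close>)
  then have "(deriv (pres S g) has_real_derivative
               S * g * (g + 1) * (t - 1) powr (- g - 2) - 6 * t powr (- 4)) (at t)"
    by (rule has_field_derivative_transform_within_open[where S = "{1<..}"])
       (use assms in \<open>auto simp: DERIV_imp_deriv[OF has_real_derivative_pres]\<close>)
  then show ?thesis
    using DERIV_imp_deriv by metis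
qed

text \<open>The slope of the chord of \<open>h\<close> regarded as a function of \<open>\<tau>\<^sup>2/2\<close>; since
  \<open>dh/d(\<tau>\<^sup>2/2) = p'\<close>, it is an average of \<open>p'\<close> over \<open>[a, t]\<close>.\<close>
definition chord_slope :: "(real \<Rightarrow> real) \<Rightarrow> real \<Rightarrow> real \<Rightarrow> real" where
  "chord_slope h a t = (2 * h t - 2 * h a) / (t\<^sup>2 - a\<^sup>2)"

locale enthalpy_chord =
  fixes q h :: "real \<Rightarrow> real" and t1 t2 t2a :: real
  assumes t1_pos: "0 < t1" and t1_less_t2: "t1 < t2" and t2_less_t2a: "t2 < t2a"
    and q_decreasing: "strict_antimono_on {t1..t2} q"
    and q_increasing: "strict_mono_on {t2..} q"
    and q_t2a: "q t2a = q t1"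
    and h_deriv: "\<And>t. t1 \<le> t \<Longrightarrow> (h has_real_derivative t * q t) (at t)"
begin

definition chord_defect :: "real \<Rightarrow> real" where
  "chord_defect t = 2 * h t - 2 * h t1 - q t1 * (t\<^sup>2 - t1\<^sup>2)"

lemma q_below_level: "t1 < t \<Longrightarrow> t < t2a \<Longrightarrow> q t < q t1"
  using monotone_onD[OF q_decreasing, of t1 t] strict_mono_onD[OF q_increasing, of t t2a]
    q_t2a t1_less_t2 t2_less_t2a
  by (cases "t \<le> t2") auto

lemma q_above_level: "t2a < t \<Longrightarrow> q t1 < q t"
  using strict_mono_onD[OF q_increasing, of t2a t] q_t2a t2_less_t2a by auto

lemma chord_defect_deriv:
  "t1 \<le> t \<Longrightarrow> (chord_defect has_real_derivative 2 * t * (q t - q t1)) (at t)"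
  unfolding chord_defect_def[abs_def]
  by (rule derivative_eq_intros refl h_deriv | assumption)+ (simp add: algebra_simps)

lemma chord_defect_decreasing: "strict_antimono_on {t1..t2a} chord_defect"
proof (rule DERIV_neg_imp_strict_antimono_on)
  show "2 * t * (q t - q t1) < 0" if "t1 < t" "t < t2a" for t
    using q_below_level[OF that] that t1_pos by (simp add: mult_pos_neg)
qed (rule chord_defect_deriv)

lemma chord_defect_increasing: "strict_mono_on {t2a..} chord_defect"
proof (rule DERIV_pos_imp_strict_mono_on_atLeast)
  show "0 < 2 * t * (q t - q t1)" if "t2a < t" for t
    using q_above_level[OF that] that t1_pos t1_less_t2 t2_less_t2a by simp
qed (use chord_defect_deriv t1_less_t2 t2_less_t2a in auto)

lemma chord_defect_neg: "t1 < t \<Longrightarrow> t \<le> t2a \<Longrightarrow> chord_defect t < 0"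
  using monotone_onD[OF chord_defect_decreasing, of t1 t] t1_less_t2 t2_less_t2a
  by (simp add: chord_defect_def)

text \<open>Beyond \<open>t3 = t2a + 1\<close> the derivative \<open>2t(q t - q t1)\<close> stays above the positive
  constant \<open>c = 2 t3 (q t3 - q t1)\<close>.\<close>
lemma chord_defect_eventually_pos: "\<exists>b. t2a < b \<and> 0 < chord_defect b"
proof -
  define t3 where "t3 = t2a + 1"
  define c where "c = 2 * t3 * (q t3 - q t1)"
  define b where "b = t3 + \<bar>chord_defect t3\<bar> / c + 1"
  have t3: "t1 < t3" "t2a < t3" using t1_less_t2 t2_less_t2a by (simp_all add: t3_def)
  have c: "0 < c" using q_above_level[OF t3(2)] t3 t1_pos by (simp add: c_def)
  have "t3 < b" using c by (simp add: b_def add_nonneg_pos)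
  have "c \<le> 2 * x * (q x - q t1)" if "t3 \<le> x" for x
  proof -
    have "q t3 \<le> q x"
      using strict_mono_onD[OF q_increasing, of t3 x] that t3 t2_less_t2a
      by (cases "t3 = x") auto
    then show ?thesis
      unfolding c_def using that t3 t1_pos q_above_level[OF t3(2)]
      by (intro mult_mono) auto
  qed
  then have "chord_defect t3 + c * (b - t3) \<le> chord_defect b"
    using \<open>t3 < b\<close> t3 chord_defect_deriv
    by (intro DERIV_ge_imp_linear_growth[where f' = "\<lambda>x. 2 * x * (q x - q t1)"]) auto
  moreover have "c * (b - t3) = \<bar>chord_defect t3\<bar> + c"
    using c by (simp add: b_def field_simps)
  ultimately show ?thesis
    using c \<open>t3 < b\<close> t3 by (intro exI[of _ b]) auto
qed

lemma chord_defect_unique_zero: "\<exists>!x. t2a < x \<and> chord_defect x = 0"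
proof -
  obtain b where b: "t2a < b" "0 < chord_defect b"
    using chord_defect_eventually_pos by blast
  have neg: "chord_defect t2a < 0"
    using chord_defect_neg t1_less_t2 t2_less_t2a by simp
  have "continuous_on {t2a..b} chord_defect"
    using t1_less_t2 t2_less_t2a
    by (intro continuous_at_imp_continuous_on ballI DERIV_isCont[OF chord_defect_deriv]) auto
  then obtain x where x: "t2a \<le> x" "chord_defect x = 0"
    using IVT'[of chord_defect t2a 0 b] neg b by auto
  with neg have "t2a < x" by (cases "x = t2a") auto
  moreover have "y = x" if "t2a < y" "chord_defect y = 0" for y
    using strict_mono_onD[OF chord_defect_increasing, of x y]
      strict_mono_onD[OF chord_defect_increasing, of y x] that x
    by (cases x y rule: linorder_cases) auto
  ultimately show ?thesis
    using x by blast
qed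

lemma chord_slope_eq_iff:
  "t1 < t \<Longrightarrow> q t1 = chord_slope h t1 t \<longleftrightarrow> chord_defect t = 0"
  using power_strict_mono[of t1 t 2] t1_pos
  by (auto simp: chord_slope_def chord_defect_def field_simps)

lemma chord_slope_less_iff:
  "t1 < t \<Longrightarrow> chord_slope h t1 t < q t1 \<longleftrightarrow> chord_defect t < 0"
  using power_strict_mono[of t1 t 2] t1_pos
  by (simp add: chord_slope_def chord_defect_def field_simps)

lemma chord_point_iff:
  "(t1 < t \<and> q t1 = chord_slope h t1 t \<and> chord_slope h t1 t < q t) \<longleftrightarrow>
   (t2a < t \<and> chord_defect t = 0)"
proof
  assume t: "t1 < t \<and> q t1 = chord_slope h t1 t \<and> chord_slope h t1 t < q t"
  then have "\<not> t < t2a" "t \<noteq> t2a"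
    using q_below_level[of t] q_t2a by auto
  with t show "t2a < t \<and> chord_defect t = 0"
    using chord_slope_eq_iff by auto
next
  assume t: "t2a < t \<and> chord_defect t = 0"
  then have "t1 < t" using t1_less_t2 t2_less_t2a by linarith
  moreover have "q t1 = chord_slope h t1 t"
    using chord_slope_eq_iff[OF \<open>t1 < t\<close>] t by simp
  moreover have "q t1 < q t"
    using q_above_level t by simp
  ultimately show "t1 < t \<and> q t1 = chord_slope h t1 t \<and> chord_slope h t1 t < q t"
    by simp
qed

lemma chord_slope_less_before_chord_point:
  assumes "t2a < tc" "chord_defect tc = 0" "t1 < t" "t < tc"
  shows "chord_slope h t1 t < q t1"
proof -
  have "chord_defect t < 0"
  proof (cases "t \<le> t2a")
    case True
    then show ?thesis using chord_defect_neg assms by blast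
  next
    case False
    then show ?thesis using strict_mono_onD[OF chord_defect_increasing, of t tc] assms by auto
  qed
  then show ?thesis using chord_slope_less_iff assms by blast
qed

end

theorem proposition3p1:
  fixes S \<gamma> \<tau>1 \<tau>2 \<tau>2a :: real and h :: "real \<Rightarrow> real"
  assumes gamma: "1 < \<gamma>" "\<gamma> < 2"
    and S: "S > 0"
    and tau12: "1 < \<tau>1" "\<tau>1 < \<tau>2"
    and p'_neg: "\<forall>\<tau>>1. deriv (pres S \<gamma>) \<tau> < 0"
    and p''_pos1: "\<forall>\<tau>. 1 < \<tau> \<and> \<tau> < \<tau>1 \<longrightarrow> deriv (deriv (pres S \<gamma>)) \<tau> > 0"
    and p''_pos2: "\<forall>\<tau>. \<tau>2 < \<tau> \<longrightarrow> deriv (deriv (pres S \<gamma>)) \<tau> > 0"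
    and p''_neg: "\<forall>\<tau>. \<tau>1 < \<tau> \<and> \<tau> < \<tau>2 \<longrightarrow> deriv (deriv (pres S \<gamma>)) \<tau> < 0"
    and h_deriv: "\<forall>\<tau>>1. (h has_real_derivative \<tau> * deriv (pres S \<gamma>) \<tau>) (at \<tau>)"
    and tau2a: "\<tau>2 < \<tau>2a" "deriv (pres S \<gamma>) \<tau>2a = deriv (pres S \<gamma>) \<tau>1"
  shows "(\<exists>!\<tau>c. \<tau>1 < \<tau>c \<and>
            deriv (pres S \<gamma>) \<tau>1 = (2 * h \<tau>c - 2 * h \<tau>1) / (\<tau>c\<^sup>2 - \<tau>1\<^sup>2) \<and>
            (2 * h \<tau>c - 2 * h \<tau>1) / (\<tau>c\<^sup>2 - \<tau>1\<^sup>2) < deriv (pres S \<gamma>) \<tau>c)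
       \<and> (\<forall>\<tau>c. \<tau>1 < \<tau>c \<and>
            deriv (pres S \<gamma>) \<tau>1 = (2 * h \<tau>c - 2 * h \<tau>1) / (\<tau>c\<^sup>2 - \<tau>1\<^sup>2) \<and>
            (2 * h \<tau>c - 2 * h \<tau>1) / (\<tau>c\<^sup>2 - \<tau>1\<^sup>2) < deriv (pres S \<gamma>) \<tau>c
          \<longrightarrow> \<tau>2a < \<tau>c \<and>
              (\<forall>\<tau>. \<tau>1 < \<tau> \<and> \<tau> < \<tau>c \<longrightarrow>
                 deriv (pres S \<gamma>) \<tau>1 > (2 * h \<tau> - 2 * h \<tau>1) / (\<tau>\<^sup>2 - \<tau>1\<^sup>2)))"
proof -
  let ?q = "deriv (pres S \<gamma>)"
  have q_deriv: "(?q has_real_derivative deriv ?q t) (at t)" if "\<tau>1 \<le> t" for t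
    using deriv_pres_has_real_derivative that tau12 by simp
  have "strict_antimono_on {\<tau>1..\<tau>2} ?q"
    by (rule DERIV_neg_imp_strict_antimono_on[OF q_deriv]) (use p''_neg in auto)
  moreover have "strict_mono_on {\<tau>2..} ?q"
    by (rule DERIV_pos_imp_strict_mono_on_atLeast[where f' = "deriv ?q"])
       (use q_deriv tau12 p''_pos2 in auto)
  ultimately interpret enthalpy_chord ?q h \<tau>1 \<tau>2 \<tau>2a
    by unfold_locales (use tau12 tau2a h_deriv in auto)
  show ?thesis
    unfolding chord_point_iff[unfolded chord_slope_def]
    using chord_defect_unique_zero chord_slope_less_before_chord_point[unfolded chord_slope_def]
    by blast
qed

end
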